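(* Let $r\ge 2$ and let $F$ be a graph with chromatic number $\chi(F)=r+1$ that has a color-critical edge; let $t=|V(F)|$. There exists $\varepsilon_0>0$ such that for every $0<\varepsilon<\varepsilon_0$ there is $n_0$ with the following property. Let $G$ be an $F$-free graph on $n\ge n_0$ vertices, and let $U_1,\dots,U_r$ be pairwise disjoint subsets of $V(G)$ with $|U_i|\ge rt\varepsilon n+t$ for every $i$, such that for every $i$, every $v\in U_i$ and every $j\ne i$ we have $|N_G(v)\cap U_j|\ge |U_j|-\varepsilon n$. Then: (i) each of $U_1,\dots,U_r$ is an independent set in $G$; (ii) for every vertex $x\in V(G)\setminus(U_1\cup\dots\cup U_r)$ there is an index $i\in\{1,\dots,r\}$ such that $x$ has at most $\varepsilon r t n$ neighbors in $U_i$.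
   Context: An edge $e$ of a graph $F$ is color-critical if $\chi(F-e)<\chi(F)$. A graph is $F$-free if it has no subgraph isomorphic to $F$. $N_G(v)$ denotes the set of neighbors of $v$ in $G$. The condition on $U_1,\dots,U_r$ says that the $r$-partite subgraph of $G$ with parts $U_1,\dots,U_r$ is "$\varepsilon$-almost complete": every vertex of a part has at most $\varepsilon n$ non-neighbors in each other part. *)

theory Defs
  imports Complex_Main
begin

definition simple_graph :: "'a set \<Rightarrow> 'a set set \<Rightarrow> bool" where
  "simple_graph V E \<longleftrightarrow> finite V \<and>
     (\<forall>e\<in>E. \<exists>u v. e = {u, v} \<and> u \<noteq> v \<and> u \<in> V \<and> v \<in> V)"

definition colorable :: "'a set \<Rightarrow> 'a set set \<Rightarrow> nat \<Rightarrow> bool" where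
  "colorable V E k \<longleftrightarrow> (\<exists>c :: 'a \<Rightarrow> nat. (\<forall>v\<in>V. c v < k) \<and>
      (\<forall>u\<in>V. \<forall>v\<in>V. {u, v} \<in> E \<longrightarrow> c u \<noteq> c v))"

definition chromatic_number :: "'a set \<Rightarrow> 'a set set \<Rightarrow> nat" where
  "chromatic_number V E = (LEAST k. colorable V E k)"

definition color_critical_edge :: "'a set \<Rightarrow> 'a set set \<Rightarrow> 'a set \<Rightarrow> bool" where
  "color_critical_edge V E e \<longleftrightarrow> e \<in> E \<and>
     chromatic_number V (E - {e}) < chromatic_number V E"

definition contains_subgraph :: "'a set \<Rightarrow> 'a set set \<Rightarrow> 'b set \<Rightarrow> 'b set set \<Rightarrow> bool" where
  "contains_subgraph VG EG VF EF \<longleftrightarrow> (\<exists>f :: 'b \<Rightarrow> 'a. inj_on f VF \<and> f ` VF \<subseteq> VG \<and>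
      (\<forall>u\<in>VF. \<forall>v\<in>VF. {u, v} \<in> EF \<longrightarrow> {f u, f v} \<in> EG))"

definition F_free :: "'a set \<Rightarrow> 'a set set \<Rightarrow> 'b set \<Rightarrow> 'b set set \<Rightarrow> bool" where
  "F_free VG EG VF EF \<longleftrightarrow> \<not> contains_subgraph VG EG VF EF"

definition nbhd :: "'a set \<Rightarrow> 'a set set \<Rightarrow> 'a \<Rightarrow> 'a set" where
  "nbhd V E v = {u \<in> V. {u, v} \<in> E}"

definition independent_set :: "'a set set \<Rightarrow> 'a set \<Rightarrow> bool" where
  "independent_set E U \<longleftrightarrow> (\<forall>u\<in>U. \<forall>v\<in>U. {u, v} \<notin> E)"

end

theory Submission imports Defs begin

(*
  Both parts come from one greedy embedding.  If parts W_1, ..., W_r are such that every vertex of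
  a part misses at most \<delta> vertices of each other part, and every part has at least |S| (\<delta> + 1)
  vertices, then any vertex set S coloured with 1..r maps injectively, colour class k into W_k,
  with vertices of different colours going to adjacent vertices: place the vertices one at a time;
  a new vertex of colour k only has to avoid the images already used and the at most \<delta>
  non-neighbours in W_k of each placed vertex, fewer than |S| (\<delta> + 1) vertices in all.

  Let ab be a colour-critical edge of F, so F - ab has an r-colouring in which a and b share a
  colour.  (i) If u, v in U_i were adjacent, send a, b to u, v and embed F - {a, b} with the common
  colour of a and b going into U_i - {u, v} and every other colour k into the common neighbourhood
  of u and v in U_k, which loses at most 2 \<epsilon> n vertices of U_k.  (ii) If x outside the parts had
  more than \<epsilon> r t n neighbours in every U_k, send a to x and embed F - a into the neighbourhoods of
  x in the parts; here n \<ge> 1/\<epsilon> makes \<epsilon> r t n \<ge> (t - 1) (\<epsilon> n + 1).  Either way G contains F.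
*)

lemma card_le_card_Int_Int_plus_Diff:
  "card Y \<le> card (Y \<inter> A \<inter> B) + card (Y - A) + card (Y - B)"
proof -
  have "Y = (Y \<inter> A \<inter> B) \<union> (Y - A) \<union> (Y - B)" by blast
  then have "card Y \<le> card ((Y \<inter> A \<inter> B) \<union> (Y - A)) + card (Y - B)"
    by (metis card_Un_le)
  also have "\<dots> \<le> card (Y \<inter> A \<inter> B) + card (Y - A) + card (Y - B)"
    using card_Un_le by simp
  finally show ?thesis .
qed

lemma real_card_Diff_doubleton:
  assumes "x \<noteq> y" "x \<in> A" "y \<in> A" "finite A"
  shows "real (card (A - {x, y})) = real (card A) - 2"
proof -
  have "card {x, y} \<le> card A"
    using assms by (intro card_mono) auto
  then show ?thesis
    using assms by (simp add: card_Diff_subset)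
qed

lemma simple_graph_edge_neq: "simple_graph V E \<Longrightarrow> {x, y} \<in> E \<Longrightarrow> x \<noteq> y"
  unfolding simple_graph_def by (metis doubleton_eq_iff insert_absorb2)

lemma simple_graph_loop_free: "simple_graph V E \<Longrightarrow> {x} \<notin> E"
  using simple_graph_edge_neq[of V E x x] by auto

lemma simple_graph_edge_in: "simple_graph V E \<Longrightarrow> {x, y} \<in> E \<Longrightarrow> x \<in> V \<and> y \<in> V"
  unfolding simple_graph_def by (metis doubleton_eq_iff)

lemma simple_graph_edgeE:
  assumes "simple_graph V E" "e \<in> E"
  obtains a b where "e = {a, b}" "a \<noteq> b" "a \<in> V" "b \<in> V"
  using assms unfolding simple_graph_def by blast

lemma simple_graph_colorable_card: "simple_graph V E \<Longrightarrow> colorable V E (card V)"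
proof -
  assume G: "simple_graph V E"
  then obtain h where h: "bij_betw h V {0..<card V}"
    unfolding simple_graph_def using ex_bij_betw_finite_nat by blast
  then have "\<forall>v\<in>V. h v < card V" using bij_betwE by fastforce
  moreover have "h u \<noteq> h v" if "u \<in> V" "v \<in> V" "{u, v} \<in> E" for u v
    using simple_graph_edge_neq[OF G that(3)] h that(1,2) unfolding bij_betw_def inj_on_def by blast
  ultimately show ?thesis unfolding colorable_def by blast
qed

lemma colorable_chromatic_number:
  "simple_graph V E \<Longrightarrow> colorable V E (chromatic_number V E)"
  unfolding chromatic_number_def by (rule LeastI) (rule simple_graph_colorable_card)

lemma chromatic_number_le: "colorable V E k \<Longrightarrow> chromatic_number V E \<le> k"
  unfolding chromatic_number_def by (rule Least_le)

lemma colorable_mono: "colorable V E k \<Longrightarrow> k \<le> k' \<Longrightarrow> colorable V E k'"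
  unfolding colorable_def using less_le_trans by blast

lemma critical_edge_coloring:
  assumes F: "simple_graph VF EF" "chromatic_number VF EF = r + 1"
    and critical: "color_critical_edge VF EF {a, b}"
  obtains c where "\<forall>v\<in>VF. c v < r"
    "\<forall>u\<in>VF. \<forall>v\<in>VF. {u, v} \<in> EF - {{a, b}} \<longrightarrow> c u \<noteq> c v" "c a = c b"
proof -
  have "simple_graph VF (EF - {{a, b}})"
    using F(1) unfolding simple_graph_def by blast
  then have "colorable VF (EF - {{a, b}}) r"
    using colorable_chromatic_number colorable_mono critical F(2)
    unfolding color_critical_edge_def by (metis Suc_eq_plus1 less_Suc_eq_le)
  then obtain c where c: "\<forall>v\<in>VF. c v < r"
      "\<forall>u\<in>VF. \<forall>v\<in>VF. {u, v} \<in> EF - {{a, b}} \<longrightarrow> c u \<noteq> c v"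
    unfolding colorable_def by blast
  have "c a = c b"
  proof (rule ccontr)
    assume "c a \<noteq> c b"
    then have "\<forall>u\<in>VF. \<forall>v\<in>VF. {u, v} \<in> EF \<longrightarrow> c u \<noteq> c v"
      using c(2) by (metis Diff_iff doubleton_eq_iff singletonD)
    then have "colorable VF EF r"
      using c(1) unfolding colorable_def by blast
    then have "chromatic_number VF EF \<le> r"
      by (rule chromatic_number_le)
    then show False using F(2) by simp
  qed
  with c that show ?thesis by blast
qed

lemma critical_edge_coloring_with_color:
  assumes "simple_graph VF EF" "chromatic_number VF EF = r + 1"
    and "color_critical_edge VF EF {a, b}" and "m \<in> {1..r}"
  obtains c where "\<forall>q\<in>VF - {a, b}. c q \<in> {1..r}"
    "\<forall>p\<in>VF - {a, b}. \<forall>q\<in>VF - {a, b}. {p, q} \<in> EF \<longrightarrow> c p \<noteq> c q"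
    "\<forall>p\<in>{a, b}. \<forall>q\<in>VF - {a, b}. {p, q} \<in> EF \<longrightarrow> c q \<noteq> m"
proof -
  obtain c0 where c0: "\<forall>v\<in>VF. c0 v < r"
      "\<forall>u\<in>VF. \<forall>v\<in>VF. {u, v} \<in> EF - {{a, b}} \<longrightarrow> c0 u \<noteq> c0 v" "c0 a = c0 b"
    by (rule critical_edge_coloring[OF assms(1-3)])
  \<comment> \<open>shift the colours to \<open>1..r\<close>, then swap the colour of \<open>a\<close> and \<open>b\<close> with \<open>m\<close>\<close>
  define c where "c v = (if c0 v = c0 a then m else if Suc (c0 v) = m then Suc (c0 a) else Suc (c0 v))"
    for v
  have "c u = c v \<Longrightarrow> c0 u = c0 v" for u v
    unfolding c_def by (auto split: if_splits)
  moreover have "{p, q} \<noteq> {a, b}" if "q \<notin> {a, b}" for p q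
    using that by (auto simp: doubleton_eq_iff)
  ultimately have proper: "c p \<noteq> c q" if "p \<in> VF" "q \<in> VF - {a, b}" "{p, q} \<in> EF" for p q
    using c0(2) that by blast
  have "a \<in> VF"
    using simple_graph_edge_in[OF assms(1)] assms(3) unfolding color_critical_edge_def by blast
  then have "\<forall>q\<in>VF - {a, b}. c q \<in> {1..r}"
    using c0(1) assms(4) unfolding c_def by auto
  moreover have "\<forall>p\<in>{a, b}. c p = m"
    using c0(3) unfolding c_def by auto
  then have "\<forall>p\<in>{a, b}. \<forall>q\<in>VF - {a, b}. {p, q} \<in> EF \<longrightarrow> c q \<noteq> m"
    using proper simple_graph_edge_in[OF assms(1)] by metis
  ultimately show ?thesis
    using that proper by blast
qed

definition almost_complete_parts ::
    "'a set \<Rightarrow> 'a set set \<Rightarrow> 'k set \<Rightarrow> ('k \<Rightarrow> 'a set) \<Rightarrow> real \<Rightarrow> bool" where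
  "almost_complete_parts V E K W \<delta> \<longleftrightarrow>
     (\<forall>k\<in>K. \<forall>j\<in>K. j \<noteq> k \<longrightarrow> (\<forall>w\<in>W k. real (card (W j - nbhd V E w)) \<le> \<delta>))"

lemma almost_complete_partsI_nbhd:
  assumes "\<forall>k\<in>K. finite (U k)"
    and "\<forall>i\<in>K. \<forall>v\<in>U i. \<forall>j\<in>K. j \<noteq> i \<longrightarrow>
           real (card (nbhd V E v \<inter> U j)) \<ge> real (card (U j)) - \<delta>"
  shows "almost_complete_parts V E K U \<delta>"
  unfolding almost_complete_parts_def
proof (intro ballI impI)
  fix k j w assume k: "k \<in> K" and j: "j \<in> K" "j \<noteq> k" and w: "w \<in> U k"
  have "card (U j - nbhd V E w) = card (U j) - card (nbhd V E w \<inter> U j)"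
    using assms(1) j by (metis Int_commute card_Diff_subset_Int finite_Int)
  moreover have "card (nbhd V E w \<inter> U j) \<le> card (U j)"
    using assms(1) j by (simp add: card_mono)
  moreover have "real (card (U j)) - \<delta> \<le> real (card (nbhd V E w \<inter> U j))"
    using assms(2) k j w by blast
  ultimately show "real (card (U j - nbhd V E w)) \<le> \<delta>"
    by simp
qed

lemma almost_complete_parts_subset:
  assumes "almost_complete_parts V E K U \<delta>" "\<forall>k\<in>K. W k \<subseteq> U k" "\<forall>k\<in>K. finite (U k)"
  shows "almost_complete_parts V E K W \<delta>"
  unfolding almost_complete_parts_def
proof (intro ballI impI)
  fix k j w assume k: "k \<in> K" and j: "j \<in> K" "j \<noteq> k" and w: "w \<in> W k"
  have "card (W j - nbhd V E w) \<le> card (U j - nbhd V E w)"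
    using assms(2,3) j by (intro card_mono) auto
  then show "real (card (W j - nbhd V E w)) \<le> \<delta>"
    using assms(1,2) k j w unfolding almost_complete_parts_def by force
qed

lemma almost_complete_parts_card_common_nbhd:
  assumes "almost_complete_parts V E K U \<delta>" "i \<in> K" "k \<in> K" "k \<noteq> i" "u \<in> U i" "v \<in> U i"
  shows "real (card (U k)) - 2 * \<delta> \<le> real (card (U k \<inter> nbhd V E u \<inter> nbhd V E v))"
proof -
  have "real (card (U k - nbhd V E u)) \<le> \<delta>" "real (card (U k - nbhd V E v)) \<le> \<delta>"
    using assms unfolding almost_complete_parts_def by auto
  moreover have "card (U k)
      \<le> card (U k \<inter> nbhd V E u \<inter> nbhd V E v) + card (U k - nbhd V E u) + card (U k - nbhd V E v)"
    by (rule card_le_card_Int_Int_plus_Diff)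
  ultimately show ?thesis
    by linarith
qed

lemma exists_vertex_adjacent_to_all:
  assumes "finite W" "finite A" "finite P"
    and "\<forall>p\<in>P. real (card (W - nbhd V E p)) \<le> \<delta>"
    and "real (card A) + real (card P) * \<delta> < real (card W)"
  obtains w where "w \<in> W" "w \<notin> A" "\<forall>p\<in>P. w \<in> nbhd V E p"
proof -
  define B where "B = A \<union> (\<Union>p\<in>P. W - nbhd V E p)"
  have "card B \<le> card A + card (\<Union>p\<in>P. W - nbhd V E p)"
    unfolding B_def by (rule card_Un_le)
  also have "\<dots> \<le> card A + (\<Sum>p\<in>P. card (W - nbhd V E p))"
    by (intro add_left_mono card_UN_le assms(3))
  finally have "card B \<le> card A + (\<Sum>p\<in>P. card (W - nbhd V E p))" .
  then have "real (card B) \<le> real (card A) + (\<Sum>p\<in>P. real (card (W - nbhd V E p)))"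
    by (metis of_nat_add of_nat_le_iff of_nat_sum)
  also have "\<dots> \<le> real (card A) + real (card P) * \<delta>"
    using sum_bounded_above[of P _ \<delta>] assms(4) by simp
  finally have "card B < card W"
    using assms(5) by simp
  moreover have "finite B"
    unfolding B_def using assms(1-3) by auto
  ultimately obtain w where "w \<in> W" "w \<notin> B"
    by (meson card_mono not_le subsetI)
  then show ?thesis
    using that unfolding B_def by blast
qed

lemma greedy_partite_embedding:
  assumes "finite S" and "\<forall>s\<in>S. col s \<in> K" and "\<forall>k\<in>K. finite (W k)"
    and "almost_complete_parts V E K W \<delta>" and "\<delta> \<ge> 0"
    and "\<forall>k\<in>K. real (card S) * (\<delta> + 1) \<le> real (card (W k))"
  shows "\<exists>f. inj_on f S \<and> (\<forall>s\<in>S. f s \<in> W (col s)) \<and>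
           (\<forall>s\<in>S. \<forall>s'\<in>S. col s \<noteq> col s' \<longrightarrow> {f s, f s'} \<in> E)"
  using assms(1,2,6)
proof (induction S rule: finite_induct)
  case empty
  then show ?case by simp
next
  case (insert s S)
  define k where "k = col s"
  have k: "k \<in> K" using insert.prems(1) k_def by simp
  have card_insert: "real (card (insert s S)) = real (card S) + 1"
    using insert.hyps by simp
  then have "real (card S) * (\<delta> + 1) \<le> real (card (insert s S)) * (\<delta> + 1)"
    using \<open>\<delta> \<ge> 0\<close> by (intro mult_right_mono) auto
  then obtain f where f: "inj_on f S" "\<forall>s\<in>S. f s \<in> W (col s)"
      "\<forall>s\<in>S. \<forall>s'\<in>S. col s \<noteq> col s' \<longrightarrow> {f s, f s'} \<in> E"
    using insert.IH insert.prems by force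
  define T where "T = {s'\<in>S. col s' \<noteq> k}"
  have missing: "\<forall>p\<in>f ` T. real (card (W k - nbhd V E p)) \<le> \<delta>"
    using assms(4) k f(2) insert.prems(1) unfolding almost_complete_parts_def T_def by auto
  have "finite T" "T \<subseteq> S"
    using insert.hyps(1) unfolding T_def by auto
  then have "card (f ` T) \<le> card S"
    using card_image_le card_mono insert.hyps(1) le_trans by metis
  then have "real (card (f ` T)) * \<delta> \<le> real (card S) * \<delta>"
    using \<open>\<delta> \<ge> 0\<close> by (simp add: mult_right_mono)
  moreover have "card (f ` S) \<le> card S"
    using card_image_le[OF insert.hyps(1)] .
  ultimately have "real (card (f ` S)) + real (card (f ` T)) * \<delta> \<le> real (card S) * (\<delta> + 1)"
    by (simp add: distrib_left)
  then have "real (card (f ` S)) + real (card (f ` T)) * \<delta> < real (card (W k))"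
    using insert.prems(2) k card_insert \<open>\<delta> \<ge> 0\<close> by (fastforce simp: distrib_right)
  then obtain w where w: "w \<in> W k" "w \<notin> f ` S" "\<forall>p\<in>f ` T. w \<in> nbhd V E p"
    using exists_vertex_adjacent_to_all[OF _ _ _ missing] assms(3) k insert.hyps(1) \<open>finite T\<close>
    by blast
  have w_adj: "{w, f s'} \<in> E" if "s' \<in> S" "col s' \<noteq> k" for s'
    using w(3) that unfolding T_def nbhd_def by auto
  show ?case
  proof (intro exI[of _ "f(s := w)"] conjI)
    show "inj_on (f(s := w)) (insert s S)"
      using f(1) w(2) insert.hyps(2) by (auto simp: inj_on_def)
    show "\<forall>x\<in>insert s S. (f(s := w)) x \<in> W (col x)"
      using f(2) w(1) insert.hyps(2) k_def by auto
    show "\<forall>x\<in>insert s S. \<forall>y\<in>insert s S. col x \<noteq> col y \<longrightarrow> {(f(s := w)) x, (f(s := w)) y} \<in> E"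
      using f(3) w_adj insert.hyps(2) k_def by (auto simp: insert_commute)
  qed
qed

lemma contains_subgraph_extend_partite:
  assumes "finite VF" "finite V"
    and root: "inj_on g R" "g ` R \<subseteq> V" "\<forall>p\<in>R. \<forall>q\<in>R. {p, q} \<in> EF \<longrightarrow> {g p, g q} \<in> E"
    and coloring: "\<forall>q\<in>VF - R. c q \<in> K" "\<forall>p\<in>VF - R. \<forall>q\<in>VF - R. {p, q} \<in> EF \<longrightarrow> c p \<noteq> c q"
    and link: "\<forall>p\<in>R. \<forall>q\<in>VF - R. {p, q} \<in> EF \<longrightarrow> W (c q) \<subseteq> nbhd V E (g p)"
    and parts: "\<forall>k\<in>K. W k \<subseteq> V - g ` R" "almost_complete_parts V E K W \<delta>" "\<delta> \<ge> 0"
      "\<forall>k\<in>K. real (card (VF - R)) * (\<delta> + 1) \<le> real (card (W k))"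
  shows "contains_subgraph V E VF EF"
proof -
  have "\<forall>k\<in>K. finite (W k)"
    using parts(1) \<open>finite V\<close> finite_subset by blast
  then obtain f where f: "inj_on f (VF - R)" "\<forall>q\<in>VF - R. f q \<in> W (c q)"
      "\<forall>p\<in>VF - R. \<forall>q\<in>VF - R. c p \<noteq> c q \<longrightarrow> {f p, f q} \<in> E"
    using greedy_partite_embedding[of "VF - R" c K W V E \<delta>] \<open>finite VF\<close> coloring(1) parts(2-4)
    by blast
  define h where "h p = (if p \<in> R then g p else f p)" for p
  have f_outside: "f q \<in> V - g ` R" "f q \<in> W (c q)" if "q \<in> VF - R" for q
    using f(2) coloring(1) parts(1) that by blast+
  have "inj_on h VF"
    using root(1) f(1) f_outside(1) unfolding h_def inj_on_def by (metis DiffD2 DiffI image_eqI)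
  moreover have "h ` VF \<subseteq> V"
    using root(2) f_outside(1) unfolding h_def by auto
  moreover have "{h p, h q} \<in> E" if p: "p \<in> VF" and q: "q \<in> VF" and pq: "{p, q} \<in> EF" for p q
  proof -
    consider "p \<in> R" "q \<in> R" | "p \<in> R" "q \<in> VF - R" | "p \<in> VF - R" "q \<in> R"
      | "p \<in> VF - R" "q \<in> VF - R"
      using p q by blast
    then show ?thesis
    proof cases
      case 1
      then show ?thesis using root(3) pq unfolding h_def by simp
    next
      case 2
      then have "f q \<in> nbhd V E (g p)" using link f_outside(2) pq by blast
      then show ?thesis using 2 unfolding h_def nbhd_def by (simp add: insert_commute)
    next
      case 3
      then have "f p \<in> nbhd V E (g q)" using link f_outside(2) pq by (metis insert_commute subsetD)
      then show ?thesis using 3 unfolding h_def nbhd_def by simp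
    next
      case 4
      then show ?thesis using coloring(2) f(3) pq unfolding h_def by simp
    qed
  qed
  ultimately show ?thesis
    unfolding contains_subgraph_def by blast
qed

lemma almost_complete_parts_independent:
  fixes U :: "nat \<Rightarrow> 'a set"
  assumes F: "simple_graph VF EF" "chromatic_number VF EF = r + 1" "color_critical_edge VF EF e"
    and G: "simple_graph V E" "F_free V E VF EF"
    and parts: "\<forall>k\<in>{1..r}. U k \<subseteq> V" "almost_complete_parts V E {1..r} U \<delta>" "\<delta> \<ge> 0"
      "\<forall>k\<in>{1..r}. real (card VF) * (\<delta> + 1) \<le> real (card (U k))"
    and i: "i \<in> {1..r}"
  shows "independent_set E (U i)"
  unfolding independent_set_def
proof (intro ballI notI)
  fix u v assume u: "u \<in> U i" and v: "v \<in> U i" and uv: "{u, v} \<in> E"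
  have "e \<in> EF"
    using F(3) unfolding color_critical_edge_def by blast
  then obtain a b where e: "e = {a, b}" "a \<noteq> b" "a \<in> VF" "b \<in> VF"
    by (rule simple_graph_edgeE[OF F(1)])
  obtain c where coloring: "\<forall>q\<in>VF - {a, b}. c q \<in> {1..r}"
      "\<forall>p\<in>VF - {a, b}. \<forall>q\<in>VF - {a, b}. {p, q} \<in> EF \<longrightarrow> c p \<noteq> c q"
      and c_link: "\<forall>p\<in>{a, b}. \<forall>q\<in>VF - {a, b}. {p, q} \<in> EF \<longrightarrow> c q \<noteq> i"
    using F(3) unfolding e(1) by (rule critical_edge_coloring_with_color[OF F(1,2) _ i])
  define g where "g p = (if p = a then u else v)" for p
  define W where "W k = (if k = i then U i - {u, v} else U k \<inter> nbhd V E u \<inter> nbhd V E v)" for k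
  have finite: "finite VF" "finite V"
    using F(1) G(1) unfolding simple_graph_def by auto
  have "u \<noteq> v" using simple_graph_edge_neq[OF G(1) uv] .
  then have root: "inj_on g {a, b}" "g ` {a, b} = {u, v}"
    "\<forall>p\<in>{a, b}. \<forall>q\<in>{a, b}. {p, q} \<in> EF \<longrightarrow> {g p, g q} \<in> E"
    using uv simple_graph_loop_free[OF F(1)] e(2) unfolding g_def by (auto simp: insert_commute)
  have link: "\<forall>p\<in>{a, b}. \<forall>q\<in>VF - {a, b}. {p, q} \<in> EF \<longrightarrow> W (c q) \<subseteq> nbhd V E (g p)"
    using c_link unfolding W_def g_def by auto
  have "w \<notin> nbhd V E w" for w
    using simple_graph_loop_free[OF G(1)] unfolding nbhd_def by auto
  then have W_outside: "\<forall>k\<in>{1..r}. W k \<subseteq> V - g ` {a, b}"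
    using parts(1) i root(2) unfolding W_def by auto
  have finite_U: "\<forall>k\<in>{1..r}. finite (U k)"
    using parts(1) finite(2) finite_subset by blast
  have "\<forall>k\<in>{1..r}. W k \<subseteq> U k"
    unfolding W_def by auto
  then have W_almost_complete: "almost_complete_parts V E {1..r} W \<delta>"
    using almost_complete_parts_subset[OF parts(2) _ finite_U] by blast
  have "real (card (VF - {a, b})) = real (card VF) - 2"
    using e(2-4) finite(1) by (rule real_card_Diff_doubleton)
  then have demand: "real (card (VF - {a, b})) * (\<delta> + 1) = real (card VF) * (\<delta> + 1) - 2 * \<delta> - 2"
    by (simp only:) (simp add: algebra_simps)
  have "real (card (U i - {u, v})) = real (card (U i)) - 2"
    using \<open>u \<noteq> v\<close> u v finite_U i by (intro real_card_Diff_doubleton) auto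
  then have "real (card (VF - {a, b})) * (\<delta> + 1) \<le> real (card (W k))" if "k \<in> {1..r}" for k
    using almost_complete_parts_card_common_nbhd[OF parts(2) i that _ u v] demand parts(3)
      parts(4)[rule_format, OF that]
    unfolding W_def by (cases "k = i") auto
  moreover have "g ` {a, b} \<subseteq> V"
    using root(2) u v parts(1) i by auto
  ultimately have "contains_subgraph V E VF EF"
    using contains_subgraph_extend_partite[OF finite root(1) _ root(3) coloring link W_outside
        W_almost_complete parts(3)] by blast
  then show False
    using G(2) unfolding F_free_def by blast
qed

lemma exists_part_with_few_neighbours:
  fixes U :: "nat \<Rightarrow> 'a set"
  assumes F: "simple_graph VF EF" "chromatic_number VF EF = r + 1" "color_critical_edge VF EF e"
    and G: "simple_graph V E" "F_free V E VF EF"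
    and parts: "\<forall>k\<in>{1..r}. U k \<subseteq> V" "almost_complete_parts V E {1..r} U \<delta>" "\<delta> \<ge> 0"
    and x: "x \<in> V - (\<Union>k\<in>{1..r}. U k)"
  shows "\<exists>k\<in>{1..r}. real (card (nbhd V E x \<inter> U k)) < (real (card VF) - 1) * (\<delta> + 1)"
proof (rule ccontr)
  assume "\<not> ?thesis"
  then have many: "\<forall>k\<in>{1..r}. (real (card VF) - 1) * (\<delta> + 1) \<le> real (card (nbhd V E x \<inter> U k))"
    by auto
  have "e \<in> EF"
    using F(3) unfolding color_critical_edge_def by blast
  then obtain a b where e: "e = {a, b}" "a \<in> VF"
    by (rule simple_graph_edgeE[OF F(1)])
  obtain c where c: "\<forall>p\<in>VF. c p < r" "\<forall>p\<in>VF. \<forall>q\<in>VF. {p, q} \<in> EF - {{a, b}} \<longrightarrow> c p \<noteq> c q"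
    using F(3) unfolding e(1) by (rule critical_edge_coloring[OF F(1,2)])
  define W where "W k = nbhd V E x \<inter> U k" for k
  have finite: "finite VF" "finite V"
    using F(1) G(1) unfolding simple_graph_def by auto
  have root: "inj_on (\<lambda>_. x) {a}" "(\<lambda>_. x) ` {a} \<subseteq> V"
    "\<forall>p\<in>{a}. \<forall>q\<in>{a}. {p, q} \<in> EF \<longrightarrow> {x, x} \<in> E"
    using x simple_graph_loop_free[OF F(1)] by auto
  have coloring: "\<forall>q\<in>VF - {a}. Suc (c q) \<in> {1..r}"
    "\<forall>p\<in>VF - {a}. \<forall>q\<in>VF - {a}. {p, q} \<in> EF \<longrightarrow> Suc (c p) \<noteq> Suc (c q)"
    using c by (auto simp: doubleton_eq_iff)
  have link: "\<forall>p\<in>{a}. \<forall>q\<in>VF - {a}. {p, q} \<in> EF \<longrightarrow> W (Suc (c q)) \<subseteq> nbhd V E x"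
    unfolding W_def by blast
  have W_outside: "\<forall>k\<in>{1..r}. W k \<subseteq> V - (\<lambda>_. x) ` {a}"
    using parts(1) x unfolding W_def by auto
  have finite_U: "\<forall>k\<in>{1..r}. finite (U k)"
    using parts(1) finite(2) finite_subset by blast
  have "\<forall>k\<in>{1..r}. W k \<subseteq> U k"
    unfolding W_def by blast
  then have W_almost_complete: "almost_complete_parts V E {1..r} W \<delta>"
    using almost_complete_parts_subset[OF parts(2) _ finite_U] by blast
  have "0 < card VF"
    using e(2) finite(1) card_gt_0_iff by blast
  then have "real (card (VF - {a})) = real (card VF) - 1"
    using e(2) by (simp add: card_Diff_singleton)
  then have "\<forall>k\<in>{1..r}. real (card (VF - {a})) * (\<delta> + 1) \<le> real (card (W k))"
    using many unfolding W_def by simp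
  then have "contains_subgraph V E VF EF"
    using contains_subgraph_extend_partite[OF finite root coloring link W_outside W_almost_complete
        parts(3)] by blast
  then show False
    using G(2) unfolding F_free_def by blast
qed

lemma independent_parts_and_sparse_outside:
  fixes U :: "nat \<Rightarrow> 'a set" and \<epsilon> :: real
  assumes F: "r \<ge> 2" "simple_graph VF EF" "chromatic_number VF EF = r + 1"
      "color_critical_edge VF EF e"
    and G: "simple_graph V E" "F_free V E VF EF" "1 \<le> \<epsilon> * real (card V)"
    and parts: "\<forall>i\<in>{1..r}. U i \<subseteq> V"
      "\<forall>i\<in>{1..r}. real r * real (card VF) * \<epsilon> * real (card V) + real (card VF) \<le> real (card (U i))"
      "\<forall>i\<in>{1..r}. \<forall>v\<in>U i. \<forall>j\<in>{1..r}. j \<noteq> i \<longrightarrow>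
         real (card (U j)) - \<epsilon> * real (card V) \<le> real (card (nbhd V E v \<inter> U j))"
  shows "(\<forall>i\<in>{1..r}. independent_set E (U i)) \<and>
    (\<forall>x \<in> V - (\<Union>i\<in>{1..r}. U i). \<exists>i\<in>{1..r}.
       real (card (nbhd V E x \<inter> U i)) \<le> \<epsilon> * real r * real (card VF) * real (card V))"
proof -
  define \<delta> where "\<delta> = \<epsilon> * real (card V)"
  have "1 \<le> \<delta>"
    using G(3) unfolding \<delta>_def .
  have "finite V"
    using G(1) unfolding simple_graph_def by simp
  then have "\<forall>i\<in>{1..r}. finite (U i)"
    using parts(1) finite_subset by blast
  then have almost_complete: "almost_complete_parts V E {1..r} U \<delta>"
    using almost_complete_partsI_nbhd parts(3) unfolding \<delta>_def by blast
  have "2 * (real (card VF) * \<delta>) \<le> real r * (real (card VF) * \<delta>)"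
    using F(1) \<open>1 \<le> \<delta>\<close> by (intro mult_right_mono) auto
  moreover have "real (card VF) \<le> real (card VF) * \<delta>"
    using \<open>1 \<le> \<delta>\<close> by (simp add: mult_le_cancel_left1)
  ultimately have size: "\<forall>i\<in>{1..r}. real (card VF) * (\<delta> + 1) \<le> real (card (U i))"
    and bound: "(real (card VF) - 1) * (\<delta> + 1) \<le> \<epsilon> * real r * real (card VF) * real (card V)"
    using parts(2) \<open>1 \<le> \<delta>\<close> unfolding \<delta>_def by (auto simp: algebra_simps)
  have "\<exists>i\<in>{1..r}. real (card (nbhd V E x \<inter> U i)) \<le> \<epsilon> * real r * real (card VF) * real (card V)"
    if x: "x \<in> V - (\<Union>i\<in>{1..r}. U i)" for x
  proof -
    obtain i where "i \<in> {1..r}" "real (card (nbhd V E x \<inter> U i)) < (real (card VF) - 1) * (\<delta> + 1)"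
      using exists_part_with_few_neighbours[OF F(2-4) G(1,2) parts(1) almost_complete _ x]
        \<open>1 \<le> \<delta>\<close> by auto
    then show ?thesis
      using bound by force
  qed
  then show ?thesis
    using almost_complete_parts_independent[OF F(2-4) G(1,2) parts(1) almost_complete _ size]
      \<open>1 \<le> \<delta>\<close> by simp
qed

theorem lemma3p3:
  fixes r :: nat and VF :: "'b set" and EF :: "'b set set"
  assumes "r \<ge> 2"
    and "simple_graph VF EF"
    and "chromatic_number VF EF = r + 1"
    and "\<exists>e. color_critical_edge VF EF e"
  shows "\<exists>\<epsilon>0::real. \<epsilon>0 > 0 \<and>
    (\<forall>\<epsilon>::real. 0 < \<epsilon> \<and> \<epsilon> < \<epsilon>0 \<longrightarrow>
      (\<exists>n0::nat. \<forall>(V :: nat set) (E :: nat set set) (U :: nat \<Rightarrow> nat set).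
         simple_graph V E \<and> F_free V E VF EF \<and> card V \<ge> n0 \<and>
         (\<forall>i\<in>{1..r}. U i \<subseteq> V) \<and>
         (\<forall>i\<in>{1..r}. \<forall>j\<in>{1..r}. i \<noteq> j \<longrightarrow> U i \<inter> U j = {}) \<and>
         (\<forall>i\<in>{1..r}. real (card (U i)) \<ge> real r * real (card VF) * \<epsilon> * real (card V) + real (card VF)) \<and>
         (\<forall>i\<in>{1..r}. \<forall>v\<in>U i. \<forall>j\<in>{1..r}. j \<noteq> i \<longrightarrow>
             real (card (nbhd V E v \<inter> U j)) \<ge> real (card (U j)) - \<epsilon> * real (card V))
         \<longrightarrow>
         (\<forall>i\<in>{1..r}. independent_set E (U i)) \<and>
         (\<forall>x \<in> V - (\<Union>i\<in>{1..r}. U i). \<exists>i\<in>{1..r}.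
             real (card (nbhd V E x \<inter> U i)) \<le> \<epsilon> * real r * real (card VF) * real (card V))))"
proof -
  obtain e where critical: "color_critical_edge VF EF e"
    using assms(4) by blast
  have large: "1 \<le> \<epsilon> * real n" if "0 < \<epsilon>" "nat \<lceil>1 / \<epsilon>\<rceil> \<le> n" for \<epsilon> :: real and n
  proof -
    have "1 / \<epsilon> \<le> real n"
      using that(2) real_nat_ceiling_ge[of "1 / \<epsilon>"] by linarith
    then show ?thesis
      using that(1) by (simp add: field_simps)
  qed
  show ?thesis
    apply (intro exI[of _ "1::real"] conjI allI impI)
     apply simp
    subgoal for \<epsilon>
      by (intro exI[of _ "nat \<lceil>1 / \<epsilon>\<rceil>"] allI impI, elim conjE,
          rule independent_parts_and_sparse_outside[OF assms(1-3) critical]) (auto intro: large)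
    done
qed

end
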